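(* Fix $k\ge2$, $c>0$ and $\zeta_n\in(0,1]$ with $\limsup_n\zeta_n(k-1)c^{k-1}<e$. Let $G=G_n$ be a sequence of asymptotically tree-like, approximately regular $k$-uniform hypergraphs with maximum degree $\Delta$, and let $\mathbf x^\ast$ be the unique fixed point of $F^{G}_{c,\zeta_n}$. Then, uniformly in $v\in V(G)$, $$x_v^\ast=\left(\frac{W((k-1)c^{k-1}\zeta_n)}{(k-1)\zeta_n}\right)^{\frac1{k-1}}+o(1).$$
   Context: Hypergraphs are simple. For a hypergraph $G$ and $S\subseteq V(G)$, $d_G(S)=|\{e\in E(G):S\subseteq e\}|$, $\Delta_\ell(G)=\max_{|S|=\ell}d_G(S)$, $\Delta(G)=\Delta_1(G)$ the maximum degree, $\delta(G)$ the minimum degree, and $\Gamma(G)$ is the maximum over distinct $v,v'$ of the number of $(k-1)$-sets $S$ with $S\cup\{v\},S\cup\{v'\}\in E(G)$. A sequence $(G_n)$ of $k$-uniform hypergraphs is asymptotically tree-like if, with $G=G_n$, $\Delta=\Delta(G)$, as $n\to\infty$: (1) $\Delta\to\infty$; (2) $\Delta_\ell(G)=o(\Delta^{\frac{k-\ell}{k-1}})$ for each $\ell\in\{2,\dots,k-1\}$; (3) $\Gamma(G)=o(\Delta)$; (4) $|E(G)|/|V(G)|=\Omega(\Delta)$. It is approximately regular if also $\delta(G)=(1-o(1))\Delta(G)$. $(F^G_{c,\zeta}(\mathbf x))_v=c\exp\left(-\frac{\zeta}{\Delta}\sum_{e\ni v}\prod_{u\in e\setminus\{v\}}x_u\right)$.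 $W$ is the Lambert $W$ function. *)

theory Defs
  imports "HOL-Analysis.Analysis" "HOL-Library.Landau_Symbols"
begin

definition uniform_hypergraph :: "nat \<Rightarrow> 'a set \<Rightarrow> 'a set set \<Rightarrow> bool" where
  "uniform_hypergraph k V E \<longleftrightarrow> finite V \<and> (\<forall>e\<in>E. e \<subseteq> V \<and> card e = k)"

definition hdeg :: "'a set set \<Rightarrow> 'a set \<Rightarrow> nat" where
  "hdeg E S = card {e \<in> E. S \<subseteq> e}"

definition codeg_max :: "'a set \<Rightarrow> 'a set set \<Rightarrow> nat \<Rightarrow> nat" where
  "codeg_max V E l = Max {hdeg E S | S. S \<subseteq> V \<and> card S = l}"

definition max_degree :: "'a set \<Rightarrow> 'a set set \<Rightarrow> nat" where
  "max_degree V E = Max ((\<lambda>v. hdeg E {v}) ` V)"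

definition min_degree :: "'a set \<Rightarrow> 'a set set \<Rightarrow> nat" where
  "min_degree V E = Min ((\<lambda>v. hdeg E {v}) ` V)"

definition Gamma_hg :: "nat \<Rightarrow> 'a set \<Rightarrow> 'a set set \<Rightarrow> nat" where
  "Gamma_hg k V E = Max {card {S. card S = k - 1 \<and> S \<union> {v} \<in> E \<and> S \<union> {v'} \<in> E}
                          | v v'. v \<in> V \<and> v' \<in> V \<and> v \<noteq> v'}"

definition asymp_tree_like :: "nat \<Rightarrow> (nat \<Rightarrow> 'a set) \<Rightarrow> (nat \<Rightarrow> 'a set set) \<Rightarrow> bool" where
  "asymp_tree_like k V E \<longleftrightarrow>
     (\<forall>n. uniform_hypergraph k (V n) (E n)) \<and>
     filterlim (\<lambda>n. real (max_degree (V n) (E n))) at_top sequentially \<and>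
     (\<forall>l\<in>{2..k-1}. (\<lambda>n. real (codeg_max (V n) (E n) l)) \<in>
        o(\<lambda>n. real (max_degree (V n) (E n)) powr ((real k - real l) / (real k - 1)))) \<and>
     (\<lambda>n. real (Gamma_hg k (V n) (E n))) \<in> o(\<lambda>n. real (max_degree (V n) (E n))) \<and>
     (\<lambda>n. real (card (E n)) / real (card (V n))) \<in> \<Omega>(\<lambda>n. real (max_degree (V n) (E n)))"

definition approx_regular :: "(nat \<Rightarrow> 'a set) \<Rightarrow> (nat \<Rightarrow> 'a set set) \<Rightarrow> bool" where
  "approx_regular V E \<longleftrightarrow>
     ((\<lambda>n. real (min_degree (V n) (E n)) / real (max_degree (V n) (E n))) \<longlonglongrightarrow> 1)"

definition F_map :: "'a set \<Rightarrow> 'a set set \<Rightarrow> real \<Rightarrow> real \<Rightarrow> ('a \<Rightarrow> real) \<Rightarrow> 'a \<Rightarrow> real" where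
  "F_map V E c \<zeta> x v = c * exp (- (\<zeta> / real (max_degree V E)) *
       (\<Sum>e\<in>{e \<in> E. v \<in> e}. \<Prod>u\<in>e - {v}. x u))"

definition lambertW :: "real \<Rightarrow> real" where
  "lambertW x = (THE w. w \<ge> -1 \<and> w * exp w = x)"

end

theory Submission
  imports Defs
begin

text \<open>Write K = k - 1, let m and M be the least and the largest coordinate of the fixed point and
  r = \<delta>/\<Delta>. A vertex lies in at least \<delta> and at most \<Delta> edges, each contributing a product of
  K coordinates, so M \<le> c exp(-\<zeta> r m^K) and c exp(-\<zeta> M^K) \<le> m. With a = K c^K \<zeta>,
  p = K \<zeta> M^K and q = K \<zeta> m^K this says p \<le> a exp(-r q) and a exp(-p) \<le> q, while W(a) is the
  fixed point of t \<mapsto> a exp(-t). On a logarithmic scale this map is Lipschitz with constant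
  a/e (because t exp(-t) \<le> 1/e), and the limsup hypothesis makes it a contraction uniformly
  in n; hence ln p and ln q lie within O(1 - r) of ln W(a). Approximate regularity gives r \<rightarrow> 1,
  and K \<zeta> y^K = W(a) for the claimed limit y, so m and M both tend to y.\<close>

lemma mult_exp_strict_mono:
  fixes s t :: real
  assumes "0 \<le> s" "s < t"
  shows "s * exp s < t * exp t"
  using assms by (intro mult_strict_mono) auto

lemma lambertW_mult_exp:
  fixes w :: real
  assumes "0 < w"
  shows "lambertW (w * exp w) = w"
  unfolding lambertW_def
proof (rule the_equality)
  fix w' :: real
  assume w': "w' \<ge> -1 \<and> w' * exp w' = w * exp w"
  have "0 < w'"
  proof (rule ccontr)
    assume "\<not> 0 < w'"
    then have "w' * exp w' \<le> 0" by (simp add: mult_nonpos_nonneg)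
    then show False using w' assms by (metis exp_gt_zero mult_pos_pos not_le)
  qed
  then show "w' = w"
    using w' assms mult_exp_strict_mono by (metis less_imp_le linorder_neq_iff order_less_irrefl)
qed (use assms in simp)

lemma
  fixes a :: real
  assumes "0 < a"
  shows lambertW_pos: "0 < lambertW a"
    and lambertW_times_exp: "lambertW a * exp (lambertW a) = a"
proof -
  obtain w where "0 \<le> w" "w * exp w = a"
    using IVT[of "\<lambda>w. w * exp w" 0 a a] assms by (auto intro!: continuous_intros)
  moreover have "w \<noteq> 0" using \<open>w * exp w = a\<close> assms by auto
  ultimately have "0 < w" "lambertW a = w" "w * exp w = a"
    using lambertW_mult_exp by auto
  then show "0 < lambertW a" "lambertW a * exp (lambertW a) = a" by simp_all
qed

lemma mult_exp_neg_le: "(t::real) * exp (- t) \<le> exp (- 1)"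
proof -
  have "t * exp (- t) \<le> exp (t - 1) * exp (- t)"
    using exp_ge_add_one_self[of "t - 1"] by (intro mult_right_mono) auto
  also have "\<dots> = exp (- 1)" by (simp flip: exp_add)
  finally show ?thesis .
qed

lemma exp_neg_diff_le_ln_diff:
  fixes u v :: real
  assumes "0 < u" "u \<le> v"
  shows "exp (- u) - exp (- v) \<le> (ln v - ln u) / exp 1"
proof -
  have "ln u / exp 1 + exp (- u) \<le> ln v / exp 1 + exp (- v)"
  proof (rule DERIV_nonneg_imp_nondecreasing[OF assms(2)])
    fix t assume "u \<le> t" "t \<le> v"
    then have "0 < t" using assms by simp
    have "DERIV (\<lambda>t. ln t / exp 1 + exp (- t)) t :> 1 / t / exp 1 - exp (- t)"
      using \<open>0 < t\<close> by (auto intro!: derivative_eq_intros)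
    moreover have "exp (- t) \<le> 1 / t / exp 1"
      using mult_exp_neg_le[of t] \<open>0 < t\<close> by (simp add: exp_minus field_simps)
    ultimately show "\<exists>y. DERIV (\<lambda>t. ln t / exp 1 + exp (- t)) t :> y \<and> 0 \<le> y" by force
  qed
  then show ?thesis by (simp add: diff_divide_distrib)
qed

lemma le_divide_of_contraction:
  fixes d \<kappa> \<kappa>' R :: real
  assumes "0 \<le> R" "\<kappa> \<le> \<kappa>'" "\<kappa>' < 1"
    and "0 < d \<Longrightarrow> d \<le> \<kappa> * d + R"
  shows "d \<le> R / (1 - \<kappa>')"
proof (cases "0 < d")
  case True
  have "\<kappa> * d \<le> \<kappa>' * d" using assms(2) True by (intro mult_right_mono) auto
  then have "(1 - \<kappa>') * d \<le> R" using assms(4)[OF True] by (simp add: left_diff_distrib)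
  then show ?thesis using assms(3) by (simp add: pos_le_divide_eq mult.commute)
next
  case False
  moreover have "0 \<le> R / (1 - \<kappa>')" using assms by simp
  ultimately show ?thesis by linarith
qed

text \<open>In the notation above, (1 - r) e and e (exp((1 - r) e) - 1) bound how far the
  one-sided inequalities for p and q may miss the fixed-point equation of W(a), and the factor
  1/(1 - L/e) is the price of the contraction constant a/e \<le> L/e.\<close>
definition log_gap_above :: "real \<Rightarrow> real \<Rightarrow> real" where
  "log_gap_above L r = exp 1 * (1 - r) / (1 - L / exp 1)"

definition log_gap_below :: "real \<Rightarrow> real \<Rightarrow> real" where
  "log_gap_below L r = exp 1 * (exp ((1 - r) * exp 1) - 1) / (1 - L / exp 1)"

lemma log_gaps_nonneg:
  assumes "r \<le> 1" "L < exp 1"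
  shows log_gap_above_nonneg: "0 \<le> log_gap_above L r"
    and log_gap_below_nonneg: "0 \<le> log_gap_below L r"
  using assms by (simp_all add: log_gap_above_def log_gap_below_def)

lemma ln_lambertW_eq:
  fixes a :: real
  assumes "0 < a"
  shows "ln (lambertW a) = ln a - a * exp (- lambertW a)"
proof -
  have "a * exp (- lambertW a) = lambertW a"
    using lambertW_times_exp[OF assms] by (simp add: exp_minus field_simps)
  moreover have "ln a = ln (lambertW a) + lambertW a"
    using ln_mult[of "lambertW a" "exp (lambertW a)"] lambertW_times_exp[OF assms] lambertW_pos[OF assms]
    by simp
  ultimately show ?thesis by simp
qed

lemma ln_sub_ln_lambertW_le_log_gap_above:
  fixes a L r p q :: real
  assumes "0 < a" "a \<le> L" "L < exp 1" "0 \<le> r" "r \<le> 1" "0 < p"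
    and p_le: "p \<le> a * exp (- (r * q))" and q_ge: "a * exp (- p) \<le> q"
  shows "ln p - ln (lambertW a) \<le> log_gap_above L r"
proof -
  define w where "w = lambertW a"
  have "0 < w" using lambertW_pos[OF \<open>0 < a\<close>] by (simp add: w_def)
  have "p \<le> a * exp (- (r * (a * exp (- p))))"
  proof -
    have "r * (a * exp (- p)) \<le> r * q" using q_ge \<open>0 \<le> r\<close> by (rule mult_left_mono)
    then have "a * exp (- (r * q)) \<le> a * exp (- (r * (a * exp (- p))))" using \<open>0 < a\<close> by simp
    then show ?thesis using p_le by linarith
  qed
  then have "ln p \<le> ln a - r * (a * exp (- p))"
    using \<open>0 < p\<close> \<open>0 < a\<close> by (simp add: ln_mult ln_le_cancel_iff[symmetric])
  then have ln_p: "ln p - ln w \<le> (a * exp (- w) - a * exp (- p)) + (1 - r) * (a * exp (- p))"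
    using ln_lambertW_eq[OF \<open>0 < a\<close>] by (simp add: w_def algebra_simps)
  have "ln p - ln w \<le> a / exp 1 * (ln p - ln w) + (1 - r) * exp 1" if "0 < ln p - ln w"
  proof -
    have "w < p" using that \<open>0 < w\<close> \<open>0 < p\<close> by simp
    then have "a * (exp (- w) - exp (- p)) \<le> a * ((ln p - ln w) / exp 1)"
      using exp_neg_diff_le_ln_diff[of w p] \<open>0 < w\<close> \<open>0 < a\<close> by (intro mult_left_mono) auto
    then have "a * exp (- w) - a * exp (- p) \<le> a / exp 1 * (ln p - ln w)"
      by (simp add: right_diff_distrib diff_divide_distrib)
    moreover have "(1 - r) * (a * exp (- p)) \<le> (1 - r) * exp 1"
    proof (rule mult_left_mono)
      have "a * exp (- p) \<le> a" using \<open>0 < p\<close> \<open>0 < a\<close> by simp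
      then show "a * exp (- p) \<le> exp 1" using \<open>a \<le> L\<close> \<open>L < exp 1\<close> by linarith
    qed (use \<open>r \<le> 1\<close> in simp)
    ultimately show ?thesis using ln_p by linarith
  qed
  moreover have "a / exp 1 \<le> L / exp 1" using \<open>a \<le> L\<close> by (simp add: divide_right_mono)
  moreover have "L / exp 1 < 1" using \<open>L < exp 1\<close> by simp
  ultimately have "ln p - ln w \<le> (1 - r) * exp 1 / (1 - L / exp 1)"
    using \<open>r \<le> 1\<close> by (intro le_divide_of_contraction) auto
  then show ?thesis by (simp add: w_def log_gap_above_def mult.commute)
qed

lemma ln_lambertW_sub_ln_le_log_gap_below:
  fixes a L r p q :: real
  assumes "0 < a" "a \<le> L" "L < exp 1" "0 \<le> r" "r \<le> 1" "0 < q" "q \<le> p"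
    and p_le: "p \<le> a * exp (- (r * q))" and q_ge: "a * exp (- p) \<le> q"
  shows "ln (lambertW a) - ln q \<le> log_gap_below L r"
proof -
  define w where "w = lambertW a"
  have "0 < w" using lambertW_pos[OF \<open>0 < a\<close>] by (simp add: w_def)
  have "a * exp (- (r * q)) \<le> a" using \<open>0 < a\<close> \<open>0 \<le> r\<close> \<open>0 < q\<close> by simp
  then have "q \<le> exp 1" using \<open>q \<le> p\<close> p_le \<open>a \<le> L\<close> \<open>L < exp 1\<close> by linarith
  have "a * exp (- (a * exp (- (r * q)))) \<le> a * exp (- p)" using p_le \<open>0 < a\<close> by simp
  then have "a * exp (- (a * exp (- (r * q)))) \<le> q" using q_ge by linarith
  then have "ln a - a * exp (- (r * q)) \<le> ln q"
    using \<open>0 < a\<close> \<open>0 < q\<close> ln_le_cancel_iff[of "a * exp (- (a * exp (- (r * q))))" q]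
    by (simp add: ln_mult)
  moreover have "a * exp (- (r * q)) = a * exp (- q) + a * exp (- q) * (exp ((1 - r) * q) - 1)"
    by (simp add: algebra_simps flip: exp_add)
  ultimately have ln_q: "ln w - ln q \<le> (a * exp (- q) - a * exp (- w)) + a * exp (- q) * (exp ((1 - r) * q) - 1)"
    using ln_lambertW_eq[OF \<open>0 < a\<close>] by (simp add: w_def)
  have "ln w - ln q \<le> a / exp 1 * (ln w - ln q) + exp 1 * (exp ((1 - r) * exp 1) - 1)" if "0 < ln w - ln q"
  proof -
    have "q < w" using that \<open>0 < w\<close> \<open>0 < q\<close> by simp
    then have "a * (exp (- q) - exp (- w)) \<le> a * ((ln w - ln q) / exp 1)"
      using exp_neg_diff_le_ln_diff[of q w] \<open>0 < q\<close> \<open>0 < a\<close> by (intro mult_left_mono) auto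
    then have "a * exp (- q) - a * exp (- w) \<le> a / exp 1 * (ln w - ln q)"
      by (simp add: right_diff_distrib diff_divide_distrib)
    moreover have "a * exp (- q) * (exp ((1 - r) * q) - 1) \<le> exp 1 * (exp ((1 - r) * exp 1) - 1)"
    proof (rule mult_mono)
      have "a * exp (- q) \<le> a" using \<open>0 < q\<close> \<open>0 < a\<close> by simp
      then show "a * exp (- q) \<le> exp 1" using \<open>a \<le> L\<close> \<open>L < exp 1\<close> by linarith
      show "exp ((1 - r) * q) - 1 \<le> exp ((1 - r) * exp 1) - 1"
        using \<open>q \<le> exp 1\<close> \<open>r \<le> 1\<close> by (simp add: mult_left_mono)
    qed (use \<open>r \<le> 1\<close> \<open>0 < q\<close> in auto)
    ultimately show ?thesis using ln_q by linarith
  qed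
  moreover have "a / exp 1 \<le> L / exp 1" using \<open>a \<le> L\<close> by (simp add: divide_right_mono)
  moreover have "L / exp 1 < 1" using \<open>L < exp 1\<close> by simp
  ultimately have "ln w - ln q \<le> exp 1 * (exp ((1 - r) * exp 1) - 1) / (1 - L / exp 1)"
    using \<open>r \<le> 1\<close> by (intro le_divide_of_contraction) auto
  then show ?thesis by (simp add: w_def log_gap_below_def)
qed

lemma le_mult_exp_of_ln_scaled_power_le:
  fixes \<alpha> s t A :: real
  assumes "1 \<le> K" "0 < \<alpha>" "0 < s" "0 < t" "0 \<le> A"
    and "ln (\<alpha> * s ^ K) - ln (\<alpha> * t ^ K) \<le> A"
  shows "s \<le> t * exp A"
proof -
  have "real K * (ln s - ln t) \<le> A"
    using assms(2-4,6) by (simp add: ln_mult ln_realpow algebra_simps)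
  moreover have "ln s - ln t \<le> real K * (ln s - ln t)" if "0 \<le> ln s - ln t"
    using that \<open>1 \<le> K\<close> mult_right_mono[of 1 "real K" "ln s - ln t"] by simp
  ultimately have "ln s \<le> ln (t * exp A)"
    using \<open>0 < t\<close> \<open>0 \<le> A\<close> by (fastforce simp: ln_mult)
  then show ?thesis using \<open>0 < s\<close> \<open>0 < t\<close> by simp
qed

text \<open>The fixed point of y \<mapsto> c exp(-\<zeta> y^K), i.e. the common value of all coordinates on a
  regular hypergraph: K \<zeta> y^K is then the fixed point W(K c^K \<zeta>) of t \<mapsto> K c^K \<zeta> exp(-t).\<close>
definition regular_fixed_point :: "nat \<Rightarrow> real \<Rightarrow> real \<Rightarrow> real" where
  "regular_fixed_point K c \<zeta> = (lambertW (real K * c ^ K * \<zeta>) / (real K * \<zeta>)) powr (1 / real K)"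

lemma
  fixes K :: nat and c \<zeta> :: real
  assumes "1 \<le> K" "0 < c" "0 < \<zeta>"
  shows regular_fixed_point_pos: "0 < regular_fixed_point K c \<zeta>"
    and lambertW_eq_regular_fixed_point:
      "lambertW (real K * c ^ K * \<zeta>) = real K * \<zeta> * regular_fixed_point K c \<zeta> ^ K"
    and regular_fixed_point_le: "regular_fixed_point K c \<zeta> \<le> c"
proof -
  define a where "a = real K * c ^ K * \<zeta>"
  define y where "y = regular_fixed_point K c \<zeta>"
  have "0 < real K" using \<open>1 \<le> K\<close> by simp
  have "0 < a" using \<open>0 < real K\<close> \<open>0 < c\<close> \<open>0 < \<zeta>\<close> by (simp add: a_def)
  then have "0 < lambertW a" by (rule lambertW_pos)
  then show "0 < regular_fixed_point K c \<zeta>"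
    using \<open>0 < real K\<close> \<open>0 < \<zeta>\<close> by (simp add: regular_fixed_point_def a_def)
  show w_eq: "lambertW a = real K * \<zeta> * y ^ K"
    using \<open>0 < lambertW a\<close> \<open>0 < real K\<close> \<open>0 < \<zeta>\<close>
    by (simp add: y_def regular_fixed_point_def a_def powr_realpow[symmetric] powr_powr)
  have "lambertW a * 1 < lambertW a * exp (lambertW a)"
    using \<open>0 < lambertW a\<close> by (intro mult_strict_left_mono) auto
  then have "lambertW a < a" using lambertW_times_exp[OF \<open>0 < a\<close>] by simp
  then have "real K * \<zeta> * y ^ K < real K * \<zeta> * c ^ K" unfolding w_eq by (simp add: a_def mult_ac)
  then have "y ^ K < c ^ K" using \<open>0 < real K\<close> \<open>0 < \<zeta>\<close> by simp
  then show "y \<le> c"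
    using \<open>0 < c\<close> by (meson less_imp_le power_less_imp_less_base)
qed

lemma scaled_power_mult_exp:
  fixes c \<zeta> s :: real
  shows "real K * \<zeta> * (c * exp (- (\<zeta> * s))) ^ K = real K * c ^ K * \<zeta> * exp (- (real K * \<zeta> * s))"
  by (simp add: power_mult_distrib exp_of_nat_mult[symmetric] algebra_simps)

lemma min_max_near_regular_fixed_point:
  fixes K :: nat and c \<zeta> r L m M :: real
  assumes "1 \<le> K" "0 < c" "0 < \<zeta>" "0 \<le> r" "r \<le> 1" "0 < m" "m \<le> M"
    and "real K * c ^ K * \<zeta> \<le> L" "L < exp 1"
    and M_le: "M \<le> c * exp (- (\<zeta> * (r * m ^ K)))" and m_ge: "c * exp (- (\<zeta> * M ^ K)) \<le> m"
  defines "y \<equiv> regular_fixed_point K c \<zeta>"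
  shows "M \<le> y * exp (log_gap_above L r)" and "y * exp (- log_gap_below L r) \<le> m"
proof -
  define a where "a = real K * c ^ K * \<zeta>"
  define p where "p = real K * \<zeta> * M ^ K"
  define q where "q = real K * \<zeta> * m ^ K"
  have "0 < a" "a \<le> L" using assms(1-3,8) by (simp_all add: a_def)
  have "0 < y" and w_eq: "lambertW a = real K * \<zeta> * y ^ K"
    using regular_fixed_point_pos lambertW_eq_regular_fixed_point assms(1-3) by (simp_all add: y_def a_def)
  have "0 < q" "q \<le> p" using assms(1,3,6,7) by (simp_all add: p_def q_def power_mono)
  have "p \<le> real K * \<zeta> * (c * exp (- (\<zeta> * (r * m ^ K)))) ^ K"
    using M_le \<open>0 < m\<close> \<open>m \<le> M\<close> \<open>0 < \<zeta>\<close> unfolding p_def by (intro mult_left_mono power_mono) auto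
  then have p_le: "p \<le> a * exp (- (r * q))"
    unfolding scaled_power_mult_exp by (simp add: a_def q_def mult_ac)
  have "real K * \<zeta> * (c * exp (- (\<zeta> * M ^ K))) ^ K \<le> q"
    using m_ge \<open>0 < c\<close> \<open>0 < \<zeta>\<close> unfolding q_def by (intro mult_left_mono power_mono) auto
  then have q_ge: "a * exp (- p) \<le> q"
    unfolding scaled_power_mult_exp by (simp add: a_def p_def)
  have "ln p - ln (lambertW a) \<le> log_gap_above L r"
    using \<open>0 < q\<close> \<open>q \<le> p\<close> by (intro ln_sub_ln_lambertW_le_log_gap_above[OF \<open>0 < a\<close> \<open>a \<le> L\<close>
        \<open>L < exp 1\<close> \<open>0 \<le> r\<close> \<open>r \<le> 1\<close> _ p_le q_ge]) simp
  then show "M \<le> y * exp (log_gap_above L r)"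
    using assms(1,3,6,7) \<open>0 < y\<close> log_gap_above_nonneg[OF \<open>r \<le> 1\<close> \<open>L < exp 1\<close>]
    unfolding p_def w_eq by (intro le_mult_exp_of_ln_scaled_power_le[of K "real K * \<zeta>"]) auto
  have "ln (lambertW a) - ln q \<le> log_gap_below L r"
    by (rule ln_lambertW_sub_ln_le_log_gap_below[OF \<open>0 < a\<close> \<open>a \<le> L\<close> \<open>L < exp 1\<close> \<open>0 \<le> r\<close>
        \<open>r \<le> 1\<close> \<open>0 < q\<close> \<open>q \<le> p\<close> p_le q_ge])
  then have "y \<le> m * exp (log_gap_below L r)"
    using assms(1,3,6) \<open>0 < y\<close> log_gap_below_nonneg[OF \<open>r \<le> 1\<close> \<open>L < exp 1\<close>]
    unfolding q_def w_eq by (intro le_mult_exp_of_ln_scaled_power_le[of K "real K * \<zeta>"]) auto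
  then show "y * exp (- log_gap_below L r) \<le> m"
    by (simp add: exp_minus field_simps)
qed

lemma
  assumes "finite V" "v \<in> V"
  shows min_degree_le_card_incident: "min_degree V E \<le> card {e \<in> E. v \<in> e}"
    and card_incident_le_max_degree: "card {e \<in> E. v \<in> e} \<le> max_degree V E"
proof -
  have "card {e \<in> E. v \<in> e} = hdeg E {v}" by (simp add: hdeg_def)
  from this \<open>v \<in> V\<close> have "card {e \<in> E. v \<in> e} \<in> (\<lambda>u. hdeg E {u}) ` V" by (rule image_eqI)
  with \<open>finite V\<close> show "min_degree V E \<le> card {e \<in> E. v \<in> e}" "card {e \<in> E. v \<in> e} \<le> max_degree V E"
    unfolding min_degree_def max_degree_def by (simp_all add: Min_le Max_ge)
qed

lemma
  fixes x :: "'a \<Rightarrow> real"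
  assumes "uniform_hypergraph k V E" "e \<in> E" "v \<in> e" "0 \<le> m"
    and bounds: "\<And>u. u \<in> V \<Longrightarrow> m \<le> x u \<and> x u \<le> M"
  shows pow_le_prod_edge: "m ^ (k - 1) \<le> (\<Prod>u\<in>e - {v}. x u)"
    and prod_edge_le_pow: "(\<Prod>u\<in>e - {v}. x u) \<le> M ^ (k - 1)"
proof -
  have "e \<subseteq> V" "card e = k" "finite V"
    using assms(1,2) by (auto simp: uniform_hypergraph_def)
  then have card: "card (e - {v}) = k - 1"
    using \<open>v \<in> e\<close> finite_subset by (simp add: card_Diff_singleton)
  have "(\<Prod>u\<in>e - {v}. m) \<le> (\<Prod>u\<in>e - {v}. x u)"
    using \<open>e \<subseteq> V\<close> bounds \<open>0 \<le> m\<close> by (intro prod_mono) auto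
  then show "m ^ (k - 1) \<le> (\<Prod>u\<in>e - {v}. x u)" using card by simp
  have "(\<Prod>u\<in>e - {v}. x u) \<le> (\<Prod>u\<in>e - {v}. M)"
    using \<open>e \<subseteq> V\<close> bounds \<open>0 \<le> m\<close> by (intro prod_mono) (auto intro: order_trans)
  then show "(\<Prod>u\<in>e - {v}. x u) \<le> M ^ (k - 1)" using card by simp
qed

lemma
  fixes x :: "'a \<Rightarrow> real"
  assumes "uniform_hypergraph k V E" "0 < max_degree V E" "0 \<le> c" "0 \<le> \<zeta>" "0 \<le> m"
    and bounds: "\<And>u. u \<in> V \<Longrightarrow> m \<le> x u \<and> x u \<le> M" and "v \<in> V"
  shows F_map_ge: "c * exp (- (\<zeta> * M ^ (k - 1))) \<le> F_map V E c \<zeta> x v"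
    and F_map_le: "F_map V E c \<zeta> x v
      \<le> c * exp (- (\<zeta> * (real (min_degree V E) / real (max_degree V E) * m ^ (k - 1))))"
proof -
  define \<Delta> where "\<Delta> = real (max_degree V E)"
  define S where "S = (\<Sum>e\<in>{e \<in> E. v \<in> e}. \<Prod>u\<in>e - {v}. x u)"
  have "finite V" using assms(1) by (simp add: uniform_hypergraph_def)
  have "0 < \<Delta>" using assms(2) by (simp add: \<Delta>_def)
  have "0 \<le> M" using bounds[OF \<open>v \<in> V\<close>] \<open>0 \<le> m\<close> by linarith
  have F: "F_map V E c \<zeta> x v = c * exp (- (\<zeta> / \<Delta> * S))"
    by (simp add: F_map_def \<Delta>_def S_def)
  have "real (min_degree V E) * m ^ (k - 1) \<le> real (card {e \<in> E. v \<in> e}) * m ^ (k - 1)"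
    using min_degree_le_card_incident[OF \<open>finite V\<close> \<open>v \<in> V\<close>] \<open>0 \<le> m\<close>
    by (intro mult_right_mono) auto
  also have "\<dots> \<le> S"
    unfolding S_def using pow_le_prod_edge[OF assms(1) _ _ \<open>0 \<le> m\<close> bounds]
    by (intro sum_bounded_below) auto
  finally have "\<zeta> / \<Delta> * (real (min_degree V E) * m ^ (k - 1)) \<le> \<zeta> / \<Delta> * S"
    using \<open>0 < \<Delta>\<close> \<open>0 \<le> \<zeta>\<close> by (intro mult_left_mono) auto
  then have "exp (- (\<zeta> / \<Delta> * S)) \<le> exp (- (\<zeta> * (real (min_degree V E) / \<Delta> * m ^ (k - 1))))"
    by simp
  then show "F_map V E c \<zeta> x v
      \<le> c * exp (- (\<zeta> * (real (min_degree V E) / real (max_degree V E) * m ^ (k - 1))))"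
    unfolding F \<Delta>_def using \<open>0 \<le> c\<close> by (rule mult_left_mono)
  have "S \<le> real (card {e \<in> E. v \<in> e}) * M ^ (k - 1)"
    unfolding S_def using prod_edge_le_pow[OF assms(1) _ _ \<open>0 \<le> m\<close> bounds]
    by (intro sum_bounded_above) auto
  also have "\<dots> \<le> \<Delta> * M ^ (k - 1)"
    using card_incident_le_max_degree[OF \<open>finite V\<close> \<open>v \<in> V\<close>] \<open>0 \<le> M\<close>
    by (intro mult_right_mono) (auto simp: \<Delta>_def)
  finally have "\<zeta> / \<Delta> * S \<le> \<zeta> / \<Delta> * (\<Delta> * M ^ (k - 1))"
    using \<open>0 < \<Delta>\<close> \<open>0 \<le> \<zeta>\<close> by (intro mult_left_mono) auto
  then have "exp (- (\<zeta> * M ^ (k - 1))) \<le> exp (- (\<zeta> / \<Delta> * S))"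
    using \<open>0 < \<Delta>\<close> by simp
  then show "c * exp (- (\<zeta> * M ^ (k - 1))) \<le> F_map V E c \<zeta> x v"
    unfolding F using \<open>0 \<le> c\<close> by (rule mult_left_mono)
qed

definition fixed_point_deviation :: "real \<Rightarrow> real \<Rightarrow> real \<Rightarrow> real" where
  "fixed_point_deviation c L r = c * (exp (log_gap_above L r) - exp (- log_gap_below L r))"

lemma fixed_point_deviation_tendsto_zero:
  assumes "L < exp 1" and "(r \<longlongrightarrow> 1) F"
  shows "((\<lambda>n. fixed_point_deviation c L (r n)) \<longlongrightarrow> 0) F"
proof -
  have "((\<lambda>n. fixed_point_deviation c L (r n)) \<longlongrightarrow> fixed_point_deviation c L 1) F"
    unfolding fixed_point_deviation_def log_gap_above_def log_gap_below_def
    using assms by (intro tendsto_intros) auto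
  then show ?thesis
    by (simp add: fixed_point_deviation_def log_gap_above_def log_gap_below_def)
qed

lemma abs_sub_le_of_mult_exp_bounds:
  fixes t y c A B :: real
  assumes "y * exp (- B) \<le> t" "t \<le> y * exp A" "0 \<le> y" "y \<le> c" "0 \<le> A" "0 \<le> B"
  shows "\<bar>t - y\<bar> \<le> c * (exp A - exp (- B))"
proof -
  have "y * exp (- B) \<le> y" "y \<le> y * exp A"
    using \<open>0 \<le> y\<close> \<open>0 \<le> A\<close> \<open>0 \<le> B\<close> by (simp_all add: mult_left_le mult_le_cancel_left1)
  then have "\<bar>t - y\<bar> \<le> y * (exp A - exp (- B))"
    using assms(1,2) unfolding abs_le_iff right_diff_distrib by auto
  also have "\<dots> \<le> c * (exp A - exp (- B))"
    using \<open>y \<le> c\<close> \<open>0 \<le> A\<close> \<open>0 \<le> B\<close> by (intro mult_right_mono) auto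
  finally show ?thesis .
qed

lemma F_map_fixed_point_deviation:
  fixes x :: "'a \<Rightarrow> real"
  assumes "uniform_hypergraph k V E" "2 \<le> k" "0 < c" "0 < \<zeta>" "0 < max_degree V E"
    and "real (k - 1) * c ^ (k - 1) * \<zeta> \<le> L" "L < exp 1"
    and fixed: "\<And>u. u \<in> V \<Longrightarrow> x u = F_map V E c \<zeta> x u" and "v \<in> V"
  shows "\<bar>x v - regular_fixed_point (k - 1) c \<zeta>\<bar>
    \<le> fixed_point_deviation c L (real (min_degree V E) / real (max_degree V E))"
proof -
  define r where "r = real (min_degree V E) / real (max_degree V E)"
  define m where "m = Min (x ` V)"
  define M where "M = Max (x ` V)"
  have "finite V" using assms(1) by (simp add: uniform_hypergraph_def)
  then have bounds: "m \<le> x u \<and> x u \<le> M" if "u \<in> V" for u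
    using that by (simp add: m_def M_def)
  have "m \<in> x ` V" "M \<in> x ` V"
    using \<open>finite V\<close> \<open>v \<in> V\<close> by (auto simp: m_def M_def intro!: Min_in Max_in)
  then obtain v_min v_max where "v_min \<in> V" "x v_min = m" "v_max \<in> V" "x v_max = M"
    by (metis imageE)
  have "0 < m"
    using fixed[OF \<open>v_min \<in> V\<close>] \<open>x v_min = m\<close> \<open>0 < c\<close> by (simp add: F_map_def)
  have "0 \<le> r" "r \<le> 1"
    using min_degree_le_card_incident[OF \<open>finite V\<close> \<open>v \<in> V\<close>, of E]
      card_incident_le_max_degree[OF \<open>finite V\<close> \<open>v \<in> V\<close>, of E] \<open>0 < max_degree V E\<close>
    by (simp_all add: r_def)
  have M_le: "M \<le> c * exp (- (\<zeta> * (r * m ^ (k - 1))))"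
    using F_map_le[OF assms(1,5) _ _ _ bounds \<open>v_max \<in> V\<close>] fixed[OF \<open>v_max \<in> V\<close>] \<open>x v_max = M\<close>
      \<open>0 < c\<close> \<open>0 < \<zeta>\<close> \<open>0 < m\<close> by (simp add: r_def)
  have m_ge: "c * exp (- (\<zeta> * M ^ (k - 1))) \<le> m"
    using F_map_ge[OF assms(1,5) _ _ _ bounds \<open>v_min \<in> V\<close>] fixed[OF \<open>v_min \<in> V\<close>] \<open>x v_min = m\<close>
      \<open>0 < c\<close> \<open>0 < \<zeta>\<close> \<open>0 < m\<close> by simp
  have "1 \<le> k - 1" "m \<le> M" using assms(2) bounds[OF \<open>v \<in> V\<close>] by auto
  note near = min_max_near_regular_fixed_point[OF this(1) \<open>0 < c\<close> \<open>0 < \<zeta>\<close> \<open>0 \<le> r\<close> \<open>r \<le> 1\<close>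
      \<open>0 < m\<close> this(2) assms(6,7) M_le m_ge]
  show ?thesis
    unfolding fixed_point_deviation_def r_def[symmetric]
    using near bounds[OF \<open>v \<in> V\<close>] log_gaps_nonneg[OF \<open>r \<le> 1\<close> \<open>L < exp 1\<close>]
      regular_fixed_point_pos[OF \<open>1 \<le> k - 1\<close> \<open>0 < c\<close> \<open>0 < \<zeta>\<close>]
      regular_fixed_point_le[OF \<open>1 \<le> k - 1\<close> \<open>0 < c\<close> \<open>0 < \<zeta>\<close>]
    by (intro abs_sub_le_of_mult_exp_bounds) auto
qed

theorem mainTheorem13:
  fixes k :: nat and c :: real and \<zeta> :: "nat \<Rightarrow> real"
    and V :: "nat \<Rightarrow> 'a set" and E :: "nat \<Rightarrow> 'a set set"
    and xstar :: "nat \<Rightarrow> 'a \<Rightarrow> real"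
  assumes "k \<ge> 2" and "c > 0"
    and "\<And>n. 0 < \<zeta> n \<and> \<zeta> n \<le> 1"
    and "limsup (\<lambda>n. ereal (\<zeta> n * real (k - 1) * c ^ (k - 1))) < ereal (exp 1)"
    and "asymp_tree_like k V E" and "approx_regular V E"
    and "\<And>n v. v \<in> V n \<Longrightarrow> xstar n v = F_map (V n) (E n) c (\<zeta> n) (xstar n) v"
  shows "\<forall>\<epsilon>>0. \<forall>\<^sub>F n in sequentially. \<forall>v\<in>V n.
           \<bar>xstar n v - (lambertW (real (k - 1) * c ^ (k - 1) * \<zeta> n) / (real (k - 1) * \<zeta> n))
                           powr (1 / real (k - 1))\<bar> < \<epsilon>"
proof (intro allI impI)
  fix \<epsilon> :: real
  assume "0 < \<epsilon>"
  have uniform: "uniform_hypergraph k (V n) (E n)" for n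
    using assms(5) by (simp add: asymp_tree_like_def)
  obtain L where "limsup (\<lambda>n. ereal (\<zeta> n * real (k - 1) * c ^ (k - 1))) < ereal L" "L < exp 1"
    using ereal_dense2[OF assms(4)] by auto
  then have "\<forall>\<^sub>F n in sequentially. real (k - 1) * c ^ (k - 1) * \<zeta> n \<le> L"
    by (auto dest!: Limsup_lessD elim!: eventually_mono simp: algebra_simps)
  moreover have "\<forall>\<^sub>F n in sequentially. 0 < real (max_degree (V n) (E n))"
    using assms(5) unfolding asymp_tree_like_def filterlim_at_top_dense by blast
  moreover have "\<forall>\<^sub>F n in sequentially.
      fixed_point_deviation c L (real (min_degree (V n) (E n)) / real (max_degree (V n) (E n))) < \<epsilon>"
    using fixed_point_deviation_tendsto_zero[OF \<open>L < exp 1\<close>] assms(6) \<open>0 < \<epsilon>\<close>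
    by (auto simp: approx_regular_def dest: order_tendstoD(2))
  ultimately show "\<forall>\<^sub>F n in sequentially. \<forall>v\<in>V n.
      \<bar>xstar n v - (lambertW (real (k - 1) * c ^ (k - 1) * \<zeta> n) / (real (k - 1) * \<zeta> n))
                      powr (1 / real (k - 1))\<bar> < \<epsilon>"
  proof eventually_elim
    case (elim n)
    show ?case
      using F_map_fixed_point_deviation[OF uniform assms(1,2) _ _ elim(1) \<open>L < exp 1\<close> assms(7)]
        assms(3)[of n] elim(2,3) by (fastforce simp: regular_fixed_point_def)
  qed
qed

end
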